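(* Consider the random network with $n$ nodes in a typical configuration operated under Policy $\Sigma_n$ with fixed constants $p_\Delta,\alpha\in(0,1)$, $\Delta>0$. Then there is a constant $c>0$ independent of $n$ such that: (a) in any sub-slot A in which nodes S (a source) and R are neighbors, S transmits a packet to R successfully with probability at least $c$; (b) in any sub-slot B in which nodes R and D (a destination) are neighbors, R transmits a packet to D successfully with probability at least $c$.
   Context: $S^2$ is the unit-area sphere in $\mathbb R^3$. There are $n$ nodes, randomly split into $n/2$ source-destination pairs. Each node $i$ has an independent uniformly random great circle $G_i$ (great circle $G(x)$ perpendicular to the diameter through a uniformly random point $x\in S^2$), carrying $\sqrt n$ equidistant lattice points forming a discrete torus of size $\sqrt n$; each node moves independently by a natural random walk on these points (uniform initial position; each step stays, moves $-1$, or moves $+1$ mod $\sqrt n$, each with probability $1/3$). Time is slotted. Relaxed Protocol model: a transmission from $i$ to $j$ succeeds if every other simultaneous transmitter $k$ satisfies $d(k,j)\ge(1+\Delta)d(i,j)$, $d$ the distance on the sphere. For $i\ne j$, $z_{ij}$ is one of the two points of $G_i\cap G_j$ chosen uniformly at random, and ${\cal C}_{ij}$ is the disk of radius $(2+\Delta)\sqrt{\pi/n}$ centered at $z_{ij}$. The configuration is typical if the number of great circles passing through each ${\cal C}_{ij}$ is $\Theta(\sqrt n)$. Nodes $i,j$ are neighbors at a time if both are at the lattice points on their circles closest to $z_{ij}$. Policy $\Sigma_n$: each slot has sub-slots A and B. In sub-slot A, each source independently becomes active with probability $p_\Delta$; an active source with at least one neighbor, with probability $\alpha$, picks a neighbor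 uniformly at random and transmits to it a packet for its destination. In sub-slot B, each node independently becomes active with probability $p_\Delta$; an active node having neighbors that are destination nodes picks one uniformly at random and transmits to it a packet for that destination if it has one (FIFO). *)

theory Defs
  imports "HOL-Analysis.Analysis" "HOL-Probability.Probability"
begin

type_synonym pt = "real ^ 3"

text \<open>Radius of the unit-area sphere: 4 pi rho^2 = 1.\<close>
definition rho :: real where "rho = 1 / (2 * sqrt pi)"

definition sphere2 :: "pt set" where "sphere2 = {y. norm y = rho}"

definition sdist :: "pt \<Rightarrow> pt \<Rightarrow> real" where
  "sdist a b = rho * arccos ((a \<bullet> b) / rho\<^sup>2)"

definition great_circle :: "pt \<Rightarrow> pt set" where
  "great_circle x = {y. norm y = rho \<and> y \<bullet> x = 0}"

definition sdisk :: "pt \<Rightarrow> real \<Rightarrow> pt set" where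
  "sdisk z r = {y \<in> sphere2. sdist y z \<le> r}"

definition lattice_pt :: "nat \<Rightarrow> pt \<Rightarrow> pt \<Rightarrow> nat \<Rightarrow> pt" where
  "lattice_pt m u v k =
     rho *\<^sub>R (cos (2 * pi * real k / real m) *\<^sub>R u + sin (2 * pi * real k / real m) *\<^sub>R v)"

definition walk_step :: "nat \<Rightarrow> nat \<Rightarrow> nat pmf" where
  "walk_step m k = map_pmf (\<lambda>d. (k + m - 1 + d) mod m) (pmf_of_set {0, 1, 2::nat})"

fun walk_pmf :: "nat \<Rightarrow> nat \<Rightarrow> nat pmf" where
  "walk_pmf m 0 = pmf_of_set {..<m}"
| "walk_pmf m (Suc t) = bind_pmf (walk_pmf m t) (walk_step m)"

definition positions_pmf :: "nat \<Rightarrow> nat \<Rightarrow> nat \<Rightarrow> (nat \<Rightarrow> nat) pmf" where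
  "positions_pmf n m t = Pi_pmf {..<n} 0 (\<lambda>i. walk_pmf m t)"

text \<open>A configuration: node i has great circle G(x i), carrying lattice points with
  orthonormal frame (u i, v i) spanning the plane perpendicular to x i; z i j is one of
  the two points of G_i \<inter> G_j (symmetric); Src are the sources and dst the pairing.\<close>
definition config :: "nat \<Rightarrow> (nat \<Rightarrow> pt) \<Rightarrow> (nat \<Rightarrow> pt) \<Rightarrow> (nat \<Rightarrow> pt)
     \<Rightarrow> (nat \<Rightarrow> nat \<Rightarrow> pt) \<Rightarrow> nat set \<Rightarrow> (nat \<Rightarrow> nat) \<Rightarrow> bool" where
  "config n x u v z Src dst \<longleftrightarrow>
     (\<forall>i<n. norm (x i) = rho \<and> norm (u i) = 1 \<and> norm (v i) = 1 \<and> u i \<bullet> v i = 0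
            \<and> u i \<bullet> x i = 0 \<and> v i \<bullet> x i = 0)
   \<and> (\<forall>i<n. \<forall>j<n. i \<noteq> j \<longrightarrow> z i j \<in> great_circle (x i) \<inter> great_circle (x j) \<and> z i j = z j i)
   \<and> Src \<subseteq> {..<n} \<and> card Src = n div 2
   \<and> bij_betw dst Src ({..<n} - Src)"

text \<open>Typical configuration: the number of great circles through each C_ij is
  between K1 sqrt n and K2 sqrt n (Theta(sqrt n) with constants K1, K2).\<close>
definition typical :: "real \<Rightarrow> real \<Rightarrow> real \<Rightarrow> nat \<Rightarrow> (nat \<Rightarrow> pt) \<Rightarrow> (nat \<Rightarrow> nat \<Rightarrow> pt) \<Rightarrow> bool" where
  "typical K1 K2 \<Delta> n x z \<longleftrightarrow>
     (\<forall>i<n. \<forall>j<n. i \<noteq> j \<longrightarrow>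
        (let N = card {k. k < n \<and> great_circle (x k) \<inter> sdisk (z i j) ((2 + \<Delta>) * sqrt (pi / n)) \<noteq> {}}
         in K1 * sqrt n \<le> real N \<and> real N \<le> K2 * sqrt n))"

definition loc :: "nat \<Rightarrow> (nat \<Rightarrow> pt) \<Rightarrow> (nat \<Rightarrow> pt) \<Rightarrow> nat \<Rightarrow> nat \<Rightarrow> pt" where
  "loc m u v i p = lattice_pt m (u i) (v i) p"

definition closest :: "nat \<Rightarrow> (nat \<Rightarrow> pt) \<Rightarrow> (nat \<Rightarrow> pt) \<Rightarrow> nat \<Rightarrow> nat \<Rightarrow> pt \<Rightarrow> bool" where
  "closest m u v i p w \<longleftrightarrow> p < m \<and> (\<forall>q<m. sdist (loc m u v i p) w \<le> sdist (loc m u v i q) w)"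

definition neighbors :: "nat \<Rightarrow> (nat \<Rightarrow> pt) \<Rightarrow> (nat \<Rightarrow> pt) \<Rightarrow> (nat \<Rightarrow> nat \<Rightarrow> pt)
     \<Rightarrow> (nat \<Rightarrow> nat) \<Rightarrow> nat \<Rightarrow> nat \<Rightarrow> bool" where
  "neighbors m u v z pos i j \<longleftrightarrow>
     i \<noteq> j \<and> closest m u v i (pos i) (z i j) \<and> closest m u v j (pos j) (z i j)"

text \<open>Sub-slot A: action of node k (None = silent, Some j = transmits to j).\<close>
definition actionA :: "real \<Rightarrow> real \<Rightarrow> nat \<Rightarrow> nat \<Rightarrow> (nat \<Rightarrow> pt) \<Rightarrow> (nat \<Rightarrow> pt)
     \<Rightarrow> (nat \<Rightarrow> nat \<Rightarrow> pt) \<Rightarrow> nat set \<Rightarrow> (nat \<Rightarrow> nat) \<Rightarrow> nat \<Rightarrow> nat option pmf" where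
  "actionA pD \<alpha> n m u v z Src pos k =
     (if k \<notin> Src then return_pmf None else
      do { act \<leftarrow> bernoulli_pmf pD;
           let N = {j. j < n \<and> neighbors m u v z pos k j};
           if act \<and> N \<noteq> {} then
             do { a \<leftarrow> bernoulli_pmf \<alpha>;
                  if a then map_pmf Some (pmf_of_set N) else return_pmf None }
           else return_pmf None })"

definition actionB :: "real \<Rightarrow> nat \<Rightarrow> nat \<Rightarrow> (nat \<Rightarrow> pt) \<Rightarrow> (nat \<Rightarrow> pt)
     \<Rightarrow> (nat \<Rightarrow> nat \<Rightarrow> pt) \<Rightarrow> nat set \<Rightarrow> (nat \<Rightarrow> nat) \<Rightarrow> nat \<Rightarrow> nat option pmf" where
  "actionB pD n m u v z Src pos k =
     do { act \<leftarrow> bernoulli_pmf pD;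
          let N = {d. d < n \<and> d \<notin> Src \<and> neighbors m u v z pos k d};
          if act \<and> N \<noteq> {} then map_pmf Some (pmf_of_set N) else return_pmf None }"

definition slot_pmf :: "nat \<Rightarrow> nat \<Rightarrow> nat \<Rightarrow> ((nat \<Rightarrow> nat) \<Rightarrow> nat \<Rightarrow> nat option pmf)
     \<Rightarrow> ((nat \<Rightarrow> nat) \<times> (nat \<Rightarrow> nat option)) pmf" where
  "slot_pmf n m t act =
     do { pos \<leftarrow> positions_pmf n m t;
          a \<leftarrow> Pi_pmf {..<n} None (act pos);
          return_pmf (pos, a) }"

definition protocol_ok :: "real \<Rightarrow> nat \<Rightarrow> nat \<Rightarrow> (nat \<Rightarrow> pt) \<Rightarrow> (nat \<Rightarrow> pt) \<Rightarrow> (nat \<Rightarrow> nat)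
     \<Rightarrow> (nat \<Rightarrow> bool) \<Rightarrow> nat \<Rightarrow> nat \<Rightarrow> bool" where
  "protocol_ok \<Delta> n m u v pos Tx i j \<longleftrightarrow>
     (\<forall>k<n. k \<noteq> i \<and> Tx k \<longrightarrow>
        sdist (loc m u v k (pos k)) (loc m u v j (pos j))
          \<ge> (1 + \<Delta>) * sdist (loc m u v i (pos i)) (loc m u v j (pos j)))"

end

theory Submission
  imports Defs
begin

text \<open>Fix a link \<open>i \<rightarrow> j\<close> whose endpoints are neighbours, and let \<open>h = \<rho>\<pi>/\<surd>n\<close>, the largest
  distance from a point of a great circle to the closest lattice point on it. The other neighbours
  of \<open>i\<close> and the nodes that would violate the guard zone of the link all sit at lattice points within
  \<open>(3 + 2\<Delta>) h\<close> of \<open>z\<^sub>i\<^sub>j\<close>. If \<open>Z\<close> other nodes are there, then given the positions, \<open>i\<close> picks \<open>j\<close>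
  with probability at least \<open>p\<^sub>\<Delta>\<alpha>/(Z + 1)\<close> and all violators stay silent with probability at least
  \<open>(1 - p\<^sub>\<Delta>)\<^sup>Z\<^sup>+\<^sup>1\<close>, which together exceed \<open>p\<^sub>\<Delta>\<alpha>(1 - p\<^sub>\<Delta>)((1 - p\<^sub>\<Delta>)/2)\<^sup>Z\<close>.
  A great circle carries only \<open>O(1)\<close> lattice points near \<open>z\<^sub>i\<^sub>j\<close>, and only the \<open>O(\<surd>n)\<close> circles
  crossing \<open>C\<^sub>i\<^sub>j\<close> carry any, each with uniform stationary position among its \<open>\<surd>n\<close> points.
  By independence, \<open>E[w\<^sup>Z]\<close> is a product of factors \<open>1 - (1 - w)\<tau>\<^sub>k \<ge> w\<^sup>\<tau>\<^sup>k\<close>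
  with \<open>\<Sum>\<tau>\<^sub>k = O(1)\<close>, so it is bounded below independently of \<open>n\<close>.\<close>

section \<open>Geodesic distance\<close>

lemma rho_pos: "0 < rho"
  by (simp add: rho_def)

lemma abs_inner_div_rho_le:
  fixes a b :: pt
  assumes "norm a = rho" "norm b = rho"
  shows "\<bar>(a \<bullet> b) / rho\<^sup>2\<bar> \<le> 1"
proof -
  have "\<bar>a \<bullet> b\<bar> \<le> rho\<^sup>2"
    using Cauchy_Schwarz_ineq2[of a b] assms by (simp add: power2_eq_square)
  then show ?thesis
    using rho_pos by (simp add: abs_divide)
qed

lemma sdist_sym: "sdist a b = sdist b a"
  unfolding sdist_def by (simp add: inner_commute)

lemma one_minus_cos_le: "1 - cos (t::real) \<le> t\<^sup>2 / 2"
proof -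
  have "1 - cos t = 2 * (sin (t/2))\<^sup>2"
    using cos_double_sin[of "t/2"] by simp
  also have "(sin (t/2))\<^sup>2 \<le> (t/2)\<^sup>2"
    using abs_sin_x_le_abs_x[of "t/2"] by (metis abs_ge_zero power2_abs power_mono)
  finally show ?thesis by (simp add: power2_eq_square)
qed

lemma chord_le_sdist:
  fixes a b :: pt
  assumes "norm a = rho" "norm b = rho"
  shows "norm (a - b) \<le> sdist a b"
proof -
  define c where "c = (a \<bullet> b) / rho\<^sup>2"
  define th where "th = arccos c"
  have c1: "-1 \<le> c" "c \<le> 1"
    using abs_inner_div_rho_le[OF assms] unfolding c_def abs_le_iff by linarith+
  have cth: "cos th = c" and th0: "0 \<le> th"
    unfolding th_def using c1 by (simp_all add: arccos_lbound)
  have "(norm (a - b))\<^sup>2 = a \<bullet> a - 2 * (a \<bullet> b) + b \<bullet> b"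
    by (simp add: power2_norm_eq_inner inner_diff_left inner_diff_right inner_commute)
  also have "\<dots> = 2 * rho\<^sup>2 * (1 - c)"
    using assms rho_pos unfolding c_def by (simp add: power2_norm_eq_inner[symmetric] field_simps)
  also have "\<dots> \<le> 2 * rho\<^sup>2 * (th\<^sup>2/2)"
    using one_minus_cos_le[of th] cth by (intro mult_left_mono) auto
  also have "\<dots> = (rho * th)\<^sup>2"
    by (simp add: power_mult_distrib)
  finally have "norm (a - b) \<le> rho * th"
    using rho_pos th0 power2_le_imp_le by simp
  then show ?thesis
    unfolding sdist_def th_def c_def .
qed

text \<open>Project \<open>a\<close> and \<open>c\<close> onto the orthogonal complement of \<open>b\<close>; Cauchy-Schwarz there gives
  \<open>a \<bullet> c \<ge> cos (\<angle>(a,b) + \<angle>(b,c))\<close>.\<close>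
lemma arccos_inner_triangle:
  fixes a b c :: "'a::real_inner"
  assumes "norm a = 1" "norm b = 1" "norm c = 1"
  shows "arccos (a \<bullet> c) \<le> arccos (a \<bullet> b) + arccos (b \<bullet> c)"
proof -
  have bnd: "\<bar>x \<bullet> y\<bar> \<le> 1" if "norm x = 1" "norm y = 1" for x y :: 'a
    using Cauchy_Schwarz_ineq2[of x y] that by simp
  define al where "al = arccos (a \<bullet> b)"
  define be where "be = arccos (b \<bullet> c)"
  have ab: "\<bar>a \<bullet> b\<bar> \<le> 1" and bc: "\<bar>b \<bullet> c\<bar> \<le> 1" and ac: "\<bar>a \<bullet> c\<bar> \<le> 1"
    using bnd assms by auto
  have aa: "a \<bullet> a = 1" and bb: "b \<bullet> b = 1" and cc: "c \<bullet> c = 1"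
    using assms by (simp_all add: power2_norm_eq_inner[symmetric])
  define a' where "a' = a - (a \<bullet> b) *\<^sub>R b"
  define c' where "c' = c - (b \<bullet> c) *\<^sub>R b"
  have ac_split: "a \<bullet> c = a' \<bullet> c' + (a \<bullet> b) * (b \<bullet> c)"
    unfolding a'_def c'_def by (simp add: inner_diff_left inner_diff_right bb inner_commute algebra_simps)
  have "(norm a')\<^sup>2 = 1 - (a \<bullet> b)\<^sup>2"
    unfolding a'_def power2_norm_eq_inner
    by (simp add: inner_diff_left inner_diff_right bb aa inner_commute algebra_simps power2_eq_square)
  then have na: "norm a' = sin al"
    using ab by (simp add: al_def sin_arccos real_sqrt_unique)
  have "(norm c')\<^sup>2 = 1 - (b \<bullet> c)\<^sup>2"
    unfolding c'_def power2_norm_eq_inner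
    by (simp add: inner_diff_left inner_diff_right bb cc inner_commute algebra_simps power2_eq_square)
  then have nc: "norm c' = sin be"
    using bc by (simp add: be_def sin_arccos real_sqrt_unique)
  have "- (norm a' * norm c') \<le> a' \<bullet> c'"
    using Cauchy_Schwarz_ineq2[of a' c'] by linarith
  then have "- (sin al * sin be) \<le> a' \<bullet> c'"
    unfolding na nc .
  then have key: "cos (al + be) \<le> a \<bullet> c"
    using ac_split ab bc by (simp add: cos_add al_def be_def)
  have al0: "0 \<le> al" "al \<le> pi" and be0: "0 \<le> be" "be \<le> pi"
    unfolding al_def be_def using ab bc by (auto intro: arccos_lbound arccos_ubound)
  show ?thesis
  proof (cases "al + be \<le> pi")
    case True
    have "arccos (a \<bullet> c) \<le> arccos (cos (al + be))"
      using key ac by (subst arccos_le_mono) auto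
    also have "\<dots> = al + be"
      using True al0 be0 by (simp add: arccos_cos)
    finally show ?thesis unfolding al_def be_def .
  next
    case False
    then show ?thesis
      using arccos_ubound[of "a \<bullet> c"] ac unfolding al_def be_def by (auto simp: abs_le_iff)
  qed
qed

lemma sdist_triangle:
  fixes a b c :: pt
  assumes "norm a = rho" "norm b = rho" "norm c = rho"
  shows "sdist a c \<le> sdist a b + sdist b c"
proof -
  have unit: "norm (y /\<^sub>R rho) = 1" if "norm y = rho" for y :: pt
    using that rho_pos by simp
  have "(y /\<^sub>R rho) \<bullet> (y' /\<^sub>R rho) = (y \<bullet> y') / rho\<^sup>2" for y y' :: pt
    by (simp add: power2_eq_square divide_inverse)
  then have sdist_unit: "sdist y y' = rho * arccos ((y /\<^sub>R rho) \<bullet> (y' /\<^sub>R rho))" for y y' :: pt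
    unfolding sdist_def by simp
  show ?thesis
    unfolding sdist_unit distrib_left[symmetric]
    using arccos_inner_triangle[OF unit unit unit, OF assms] rho_pos by (intro mult_left_mono) auto
qed

lemma sdist_guard_violator_le:
  fixes a b c z :: pt
  assumes n: "norm a = rho" "norm b = rho" "norm c = rho" "norm z = rho"
    and az: "sdist a z \<le> h" and bz: "sdist b z \<le> h"
    and violates: "sdist c b < (1 + \<Delta>) * sdist a b" and \<Delta>: "0 \<le> \<Delta>"
  shows "sdist c z \<le> (3 + 2 * \<Delta>) * h"
proof -
  have "sdist a b \<le> sdist a z + sdist z b"
    using n by (intro sdist_triangle) auto
  then have "sdist a b \<le> 2 * h"
    using az bz sdist_sym[of z b] by simp
  then have "sdist c b \<le> (1 + \<Delta>) * (2 * h)"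
    using violates \<Delta> by (smt (verit) mult_left_mono)
  moreover have "sdist c z \<le> sdist c b + sdist b z"
    using n by (intro sdist_triangle) auto
  ultimately show ?thesis
    using bz by (simp add: algebra_simps)
qed

section \<open>Lattice points on a great circle\<close>

definition circle_frame :: "pt \<Rightarrow> pt \<Rightarrow> pt \<Rightarrow> bool" where
  "circle_frame x u v \<longleftrightarrow>
     norm x = rho \<and> norm u = 1 \<and> norm v = 1 \<and> u \<bullet> v = 0 \<and> u \<bullet> x = 0 \<and> v \<bullet> x = 0"

lemma config_circle_frame:
  "config n x u v z Src dst \<Longrightarrow> k < n \<Longrightarrow> circle_frame (x k) (u k) (v k)"
  unfolding config_def circle_frame_def by auto

lemma config_z_in_great_circles:
  "config n x u v z Src dst \<Longrightarrow> a < n \<Longrightarrow> b < n \<Longrightarrow> a \<noteq> b \<Longrightarrow>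
     z a b \<in> great_circle (x a) \<inter> great_circle (x b)"
  unfolding config_def by auto

lemma circle_frame_span:
  fixes x u v y :: pt
  assumes fr: "circle_frame x u v" and yx: "y \<bullet> x = 0"
  shows "y = (y \<bullet> u) *\<^sub>R u + (y \<bullet> v) *\<^sub>R v"
proof (rule ccontr)
  have nx: "norm x = rho" and nu: "norm u = 1" and nv: "norm v = 1" and uv: "u \<bullet> v = 0"
    and ux: "u \<bullet> x = 0" and vx: "v \<bullet> x = 0"
    using fr unfolding circle_frame_def by auto
  have uu: "u \<bullet> u = 1" and vv: "v \<bullet> v = 1" and xx: "x \<bullet> x \<noteq> 0"
    using nu nv nx rho_pos by (simp_all add: power2_norm_eq_inner[symmetric])
  define w where "w = y - (y \<bullet> u) *\<^sub>R u - (y \<bullet> v) *\<^sub>R v"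
  assume "y \<noteq> (y \<bullet> u) *\<^sub>R u + (y \<bullet> v) *\<^sub>R v"
  then have w0: "w \<noteq> 0"
    unfolding w_def by (auto simp: algebra_simps)
  have wu: "w \<bullet> u = 0" and wv: "w \<bullet> v = 0" and wx: "w \<bullet> x = 0"
    unfolding w_def by (simp_all add: inner_diff_left uu vv uv inner_commute[of v u] ux vx yx)
  define S where "S = {u, v, x, w}"
  have "pairwise orthogonal S"
    unfolding S_def pairwise_def orthogonal_def using uv ux vx wu wv wx by (auto simp: inner_commute)
  moreover have "0 \<notin> S"
    unfolding S_def using uu vv xx w0 by auto
  ultimately have "card S \<le> 3"
    using pairwise_orthogonal_independent independent_bound[of S] by fastforce
  moreover have "u \<noteq> v" "u \<noteq> x" "v \<noteq> x"
    using uv ux vx uu vv by auto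
  moreover have "u \<noteq> w" "v \<noteq> w" "x \<noteq> w"
    using wu wv wx uu vv xx by (auto simp: inner_commute)
  ultimately show False
    unfolding S_def by simp
qed

lemma great_circle_param:
  fixes x u v z :: pt
  assumes fr: "circle_frame x u v" and z: "z \<in> great_circle x"
  obtains th where "z = rho *\<^sub>R (cos th *\<^sub>R u + sin th *\<^sub>R v)"
proof -
  have uu: "u \<bullet> u = 1" and vv: "v \<bullet> v = 1" and uv: "u \<bullet> v = 0"
    using fr unfolding circle_frame_def by (simp_all add: power2_norm_eq_inner[symmetric])
  have zx: "z \<bullet> x = 0" and nz: "norm z = rho"
    using z unfolding great_circle_def by auto
  define a where "a = z \<bullet> u"
  define b where "b = z \<bullet> v"
  have zd: "z = a *\<^sub>R u + b *\<^sub>R v"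
    unfolding a_def b_def by (rule circle_frame_span[OF fr zx])
  have "rho\<^sup>2 = z \<bullet> z"
    by (metis nz power2_norm_eq_inner)
  also have "\<dots> = a\<^sup>2 + b\<^sup>2"
    unfolding zd by (simp add: inner_add_left inner_add_right uu vv uv inner_commute[of v u] power2_eq_square)
  finally have "a\<^sup>2 + b\<^sup>2 = rho\<^sup>2" ..
  then have "(a / rho)\<^sup>2 + (b / rho)\<^sup>2 = 1"
    using rho_pos by (simp add: power_divide add_divide_distrib[symmetric])
  then obtain t where t: "a / rho = cos t" "b / rho = sin t"
    by (rule sincos_total_2pi) auto
  have "z = rho *\<^sub>R (cos t *\<^sub>R u + sin t *\<^sub>R v)"
    unfolding zd t[symmetric] using rho_pos by (simp add: scaleR_add_right)
  then show ?thesis by (rule that)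
qed

lemma lattice_pt_inner:
  assumes "circle_frame x u v"
  shows "lattice_pt m u v p \<bullet> (rho *\<^sub>R (cos th *\<^sub>R u + sin th *\<^sub>R v))
           = rho\<^sup>2 * cos (2 * pi * real p / real m - th)"
proof -
  have uu: "u \<bullet> u = 1" and vv: "v \<bullet> v = 1" and uv: "u \<bullet> v = 0" and vu: "v \<bullet> u = 0"
    using assms unfolding circle_frame_def by (simp_all add: power2_norm_eq_inner[symmetric] inner_commute)
  have "(r *\<^sub>R (A *\<^sub>R u + B *\<^sub>R v)) \<bullet> (r *\<^sub>R (C *\<^sub>R u + D *\<^sub>R v)) = r * r * (A * C + B * D)"
    for r A B C D
    by (simp add: inner_add_left inner_add_right uu vv uv vu distrib_left)
  then show ?thesis
    unfolding lattice_pt_def by (simp add: cos_diff power2_eq_square)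
qed

lemma norm_lattice_pt:
  assumes "circle_frame x u v"
  shows "norm (lattice_pt m u v p) = rho"
proof -
  have "(norm (lattice_pt m u v p))\<^sup>2 = rho\<^sup>2"
    using lattice_pt_inner[OF assms, of m p "2 * pi * real p / real m"]
    unfolding power2_norm_eq_inner by (simp add: lattice_pt_def)
  then show ?thesis
    using rho_pos by (simp add: power2_eq_iff_nonneg)
qed

lemma lattice_pt_in_great_circle:
  assumes "circle_frame x u v"
  shows "lattice_pt m u v p \<in> great_circle x"
  using assms norm_lattice_pt[OF assms]
  unfolding great_circle_def lattice_pt_def circle_frame_def by (simp add: inner_add_left)

lemma exists_lattice_angle_near:
  assumes m: "0 < m"
  shows "\<exists>p<m. arccos (cos (2 * pi * real p / real m - th)) \<le> pi / real m"
proof -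
  define k where "k = \<lfloor>th * real m / (2 * pi) + 1/2\<rfloor>"
  define y where "y = 2 * pi * real_of_int k / real m - th"
  have mp: "real m > 0"
    using m by simp
  have "real_of_int k \<le> th * real m / (2 * pi) + 1/2" "th * real m / (2 * pi) + 1/2 < real_of_int k + 1"
    unfolding k_def by linarith+
  then have "th * real m - pi < 2 * pi * real_of_int k" "2 * pi * real_of_int k \<le> th * real m + pi"
    using pi_gt_zero by (simp_all add: field_simps)
  moreover have "y * real m = 2 * pi * real_of_int k - th * real m"
    unfolding y_def using mp by (simp add: field_simps)
  ultimately have "- pi \<le> y * real m" "y * real m \<le> pi"
    by linarith+
  then have ay: "\<bar>y\<bar> \<le> pi / real m"
    using mp by (simp add: abs_le_iff field_simps)
  also have "\<dots> \<le> pi"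
    using m by (simp add: divide_le_eq)
  finally have aypi: "\<bar>y\<bar> \<le> pi" .
  define p where "p = nat (k mod int m)"
  have pm: "p < m"
    unfolding p_def using m by (simp add: nat_less_iff)
  have "real p = real_of_int (k mod int m)"
    unfolding p_def using m by simp
  also have "k mod int m = k - int m * (k div int m)"
    by (simp add: minus_div_mult_eq_mod[symmetric])
  finally have rp: "real p = real_of_int k - real m * real_of_int (k div int m)"
    by simp
  have "2 * pi * real p / real m - th = y - 2 * pi * real_of_int (k div int m)"
    unfolding rp y_def using mp by (simp add: field_simps)
  then have "cos (2 * pi * real p / real m - th) = cos y"
    by (simp add: cos_diff)
  then have "arccos (cos (2 * pi * real p / real m - th)) = \<bar>y\<bar>"
    using aypi by (metis abs_ge_zero arccos_cos cos_abs_real)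
  then show ?thesis
    using pm ay by auto
qed

lemma sdist_closest_le:
  assumes fr: "circle_frame (x k) (u k) (v k)" and w: "w \<in> great_circle (x k)" and m: "0 < m"
    and cl: "closest m u v k p w"
  shows "sdist (loc m u v k p) w \<le> rho * pi / real m"
proof -
  obtain th where w_eq: "w = rho *\<^sub>R (cos th *\<^sub>R u k + sin th *\<^sub>R v k)"
    using great_circle_param[OF fr w] by blast
  obtain q where q: "q < m" "arccos (cos (2 * pi * real q / real m - th)) \<le> pi / real m"
    using exists_lattice_angle_near[OF m] by blast
  have "sdist (loc m u v k p) w \<le> sdist (loc m u v k q) w"
    using cl q(1) unfolding closest_def by auto
  also have "\<dots> = rho * arccos (cos (2 * pi * real q / real m - th))"
    unfolding sdist_def loc_def w_eq lattice_pt_inner[OF fr] using rho_pos by simp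
  also have "\<dots> \<le> rho * (pi / real m)"
    using q(2) rho_pos by (intro mult_left_mono) auto
  finally show ?thesis by simp
qed

lemma third_le_sin:
  fixes y :: real
  assumes "0 \<le> y" "y \<le> 2"
  shows "y / 3 \<le> sin y"
proof -
  have "\<bar>sin y - (\<Sum>k<3. sin_coeff k * y ^ k)\<bar> \<le> inverse (fact 3) * \<bar>y\<bar> ^ 3"
    by (rule Maclaurin_sin_bound)
  moreover have "(\<Sum>k<3. sin_coeff k * y ^ k) = y"
    by (simp add: eval_nat_numeral sin_coeff_def)
  moreover have "inverse (fact 3) * \<bar>y\<bar> ^ 3 = y * y\<^sup>2 / 6"
    using assms by (simp add: eval_nat_numeral fact_numeral power2_eq_square)
  moreover have "y * y\<^sup>2 \<le> y * 4"
    using assms by (intro mult_left_mono) (auto simp: power2_eq_square intro: mult_mono[of y 2 y 2, simplified])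
  ultimately show ?thesis by linarith
qed

lemma norm_diff_lattice_pt:
  assumes fr: "circle_frame x u v"
  shows "norm (lattice_pt m u v p - lattice_pt m u v q) = 2 * rho * \<bar>sin (pi * (real p - real q) / real m)\<bar>"
proof -
  define a where "a = 2 * pi * real p / real m"
  define b where "b = 2 * pi * real q / real m"
  define t where "t = pi * (real p - real q) / real m"
  have ab: "a - b = 2 * t"
    unfolding a_def b_def t_def by (cases "m = 0") (simp_all add: field_simps)
  have pp: "lattice_pt m u v p \<bullet> lattice_pt m u v p = rho\<^sup>2"
    and qq: "lattice_pt m u v q \<bullet> lattice_pt m u v q = rho\<^sup>2"
    using norm_lattice_pt[OF fr] by (simp_all add: power2_norm_eq_inner[symmetric])
  have pq: "lattice_pt m u v p \<bullet> lattice_pt m u v q = rho\<^sup>2 * cos (a - b)"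
    using lattice_pt_inner[OF fr, of m p b] unfolding a_def b_def by (simp add: lattice_pt_def)
  have "(norm (lattice_pt m u v p - lattice_pt m u v q))\<^sup>2
      = lattice_pt m u v p \<bullet> lattice_pt m u v p - 2 * (lattice_pt m u v p \<bullet> lattice_pt m u v q)
        + lattice_pt m u v q \<bullet> lattice_pt m u v q"
    by (simp add: power2_norm_eq_inner inner_diff_left inner_diff_right inner_commute)
  also have "\<dots> = 2 * rho\<^sup>2 * (1 - cos (2 * t))"
    unfolding pp qq pq ab by (simp add: algebra_simps)
  also have "\<dots> = (2 * rho * \<bar>sin t\<bar>)\<^sup>2"
    by (simp add: cos_double_sin power_mult_distrib)
  finally show ?thesis
    unfolding t_def using rho_pos by (simp add: power2_eq_iff_nonneg)
qed

text \<open>\<open>max p q - min p q\<close> and \<open>m\<close> minus it are the numbers of steps from \<open>p\<close> to \<open>q\<close>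
  in the two directions around the circle.\<close>
lemma lattice_index_close:
  assumes fr: "circle_frame x u v" and m: "0 < m" and p: "p < m" and q: "q < m"
    and d: "norm (lattice_pt m u v p - lattice_pt m u v q) \<le> d"
  shows "real (max p q - min p q) \<le> d * real m / rho \<or> real (m - (max p q - min p q)) \<le> d * real m / rho"
proof -
  define e where "e = max p q - min p q"
  have em: "e < m"
    unfolding e_def using p q by auto
  have mp: "real m > 0"
    using m by simp
  have "0 \<le> sin (pi * real e / real m)"
    using em mp by (intro sin_ge_zero) (auto simp: field_simps)
  moreover have "real p - real q = real e \<or> real p - real q = - real e"
    unfolding e_def by (auto simp: max_def min_def of_nat_diff)
  ultimately have "\<bar>sin (pi * (real p - real q) / real m)\<bar> = sin (pi * real e / real m)"
    by auto
  then have chord: "2 * rho * sin (pi * real e / real m) \<le> d"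
    using d norm_diff_lattice_pt[OF fr, of m p q] by simp
  have small: "real f \<le> d * real m / rho"
    if f: "2 * f \<le> m" and sf: "sin (pi * real f / real m) = sin (pi * real e / real m)" for f
  proof -
    define y where "y = pi * real f / real m"
    have "y \<le> pi / 2"
      unfolding y_def using f mp by (simp add: field_simps)
    then have y2: "y \<le> 2"
      using pi_less_4 by linarith
    have "2 * real f / real m \<le> y"
      unfolding y_def using pi_ge_two mp by (intro divide_right_mono mult_right_mono) auto
    then have "2 * real f / real m / 3 \<le> y / 3"
      by (rule divide_right_mono) simp
    also have "y / 3 \<le> sin y"
      using mp y2 by (intro third_le_sin) (simp_all add: y_def)
    finally have "2 * rho * (2 * real f / real m / 3) \<le> 2 * rho * sin y"
      using rho_pos by (intro mult_left_mono) auto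
    then have "2 * rho * (2 * real f / real m / 3) \<le> d"
      using chord unfolding y_def sf by linarith
    then have "real f * rho * 4 \<le> d * real m * 3"
      using mp by (simp add: field_simps)
    then have "real f * rho \<le> d * real m"
      using rho_pos by (smt (verit) zero_le_mult_iff of_nat_0_le_iff)
    then show ?thesis
      using rho_pos by (simp add: field_simps)
  qed
  have "real e \<le> d * real m / rho \<or> real (m - e) \<le> d * real m / rho"
  proof (cases "2 * e \<le> m")
    case True
    then show ?thesis
      using small[of e] by simp
  next
    case False
    have "sin (pi * real (m - e) / real m) = sin (pi - pi * real e / real m)"
      using em mp by (simp add: of_nat_diff field_simps)
    then show ?thesis
      using False small[of "m - e"] by simp
  qed
  then show ?thesis
    unfolding e_def .
qed

lemma card_lattice_pts_in_ball:
  assumes fr: "circle_frame x u v" and m: "0 < m" and r: "0 \<le> r"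
  shows "real (card {p. p < m \<and> norm (lattice_pt m u v p - w) \<le> r}) \<le> 8 * r * real m / rho + 2"
proof (cases "{p. p < m \<and> norm (lattice_pt m u v p - w) \<le> r} = {}")
  case True
  show ?thesis
    unfolding True using r rho_pos by simp
next
  case False
  then obtain p0 where p0: "p0 < m" "norm (lattice_pt m u v p0 - w) \<le> r"
    by auto
  define K where "K = nat \<lfloor>2 * r * real m / rho\<rfloor>"
  have KD: "real K \<le> 2 * r * real m / rho"
    unfolding K_def using r rho_pos by simp
  have "{p. p < m \<and> norm (lattice_pt m u v p - w) \<le> r} \<subseteq> {p0 - K..p0 + K} \<union> {m - K..<m} \<union> {..K}"
  proof
    fix p assume "p \<in> {p. p < m \<and> norm (lattice_pt m u v p - w) \<le> r}"
    then have p: "p < m" "norm (lattice_pt m u v p - w) \<le> r"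
      by auto
    have "norm (lattice_pt m u v p - lattice_pt m u v p0) \<le> 2 * r"
      using norm_diff_triangle_le[of _ w] p(2) p0(2) by (fastforce simp: norm_minus_commute)
    then have "real (max p p0 - min p p0) \<le> 2 * r * real m / rho
        \<or> real (m - (max p p0 - min p p0)) \<le> 2 * r * real m / rho"
      using lattice_index_close[OF fr m p(1) p0(1)] by blast
    then have "max p p0 - min p p0 \<le> K \<or> m - (max p p0 - min p p0) \<le> K"
      unfolding K_def by (metis le_nat_floor)
    then show "p \<in> {p0 - K..p0 + K} \<union> {m - K..<m} \<union> {..K}"
      using p(1) p0(1) by auto
  qed
  then have "card {p. p < m \<and> norm (lattice_pt m u v p - w) \<le> r}
      \<le> card ({p0 - K..p0 + K} \<union> {m - K..<m} \<union> {..K})"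
    by (intro card_mono) auto
  also have "\<dots> \<le> card {p0 - K..p0 + K} + card {m - K..<m} + card {..K}"
    by (meson card_Un_le add_le_mono le_refl order_trans)
  also have "\<dots> \<le> (2 * K + 1) + K + (K + 1)"
    by (intro add_mono) auto
  finally show ?thesis
    using KD by linarith
qed

section \<open>The random walk and the sub-slot actions\<close>

lemma inj_on_add_mod: "inj_on (\<lambda>k::nat. (k + c) mod m) {..<m}"
proof -
  have "a = b" if "a < m" "b < m" "b \<le> a" "(a + c) mod m = (b + c) mod m" for a b
  proof (rule ccontr)
    assume "a \<noteq> b"
    then have "0 < a - b"
      using that by auto
    moreover have "m dvd a - b"
      using that mod_eq_dvd_iff_nat[of "b + c" "a + c" m] by simp
    ultimately show False
      using that dvd_imp_le[of m "a - b"] by auto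
  qed
  then show ?thesis
    by (intro inj_onI) (metis lessThan_iff nat_le_linear)
qed

lemma walk_pmf_uniform:
  assumes m: "0 < m"
  shows "walk_pmf m t = pmf_of_set {..<m}"
proof (induction t)
  case 0
  then show ?case by simp
next
  case (Suc t)
  have shift: "map_pmf (\<lambda>k. (k + c) mod m) (pmf_of_set {..<m}) = pmf_of_set {..<m}" for c
  proof -
    have "(\<lambda>k. (k + c) mod m) ` {..<m} = {..<m}"
      by (rule endo_inj_surj[OF _ _ inj_on_add_mod]) (use m in auto)
    then show ?thesis
      using m by (subst map_pmf_of_set_inj[OF inj_on_add_mod]) auto
  qed
  have "walk_pmf m (Suc t) = bind_pmf (pmf_of_set {..<m}) (walk_step m)"
    using Suc by simp
  also have "\<dots> = bind_pmf (pmf_of_set {..<m})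
      (\<lambda>k. bind_pmf (pmf_of_set {0, 1, 2::nat}) (\<lambda>d. return_pmf ((k + m - 1 + d) mod m)))"
    unfolding walk_step_def map_pmf_def by simp
  also have "\<dots> = bind_pmf (pmf_of_set {0, 1, 2::nat})
      (\<lambda>d. map_pmf (\<lambda>k. (k + (m - 1 + d)) mod m) (pmf_of_set {..<m}))"
    unfolding map_pmf_def by (subst bind_commute_pmf) (use m in \<open>simp add: add.assoc\<close>)
  also have "\<dots> = pmf_of_set {..<m}"
    unfolding shift by simp
  finally show ?case .
qed

lemma positions_pmf_uniform:
  "0 < m \<Longrightarrow> positions_pmf n m t = Pi_pmf {..<n} 0 (\<lambda>_. pmf_of_set {..<m})"
  unfolding positions_pmf_def by (simp add: walk_pmf_uniform)

lemma set_pmf_positions_pmf: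
  assumes "0 < m"
  shows "set_pmf (positions_pmf n m t) = PiE_dflt {..<n} 0 (\<lambda>_. {..<m})"
proof -
  have "set_pmf (pmf_of_set {..<m}) = {..<m}"
    using assms by (intro set_pmf_of_set) auto
  then show ?thesis
    using assms by (simp add: positions_pmf_uniform set_Pi_pmf o_def)
qed

lemma measure_pmf_prob_bind:
  "measure_pmf.prob (bind_pmf M N) X = (\<integral>x. measure_pmf.prob (N x) X \<partial>M)"
proof -
  have "ennreal (measure_pmf.prob (bind_pmf M N) X) = (\<integral>\<^sup>+x. ennreal (measure_pmf.prob (N x) X) \<partial>M)"
    by (simp add: measure_pmf.emeasure_eq_measure[symmetric])
  also have "\<dots> = ennreal (\<integral>x. measure_pmf.prob (N x) X \<partial>M)"
    by (intro nn_integral_eq_integral measure_pmf.integrable_const_bound[where B=1]) auto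
  finally show ?thesis
    by (simp add: integral_nonneg)
qed

lemma prob_slot_pmf:
  "measure_pmf.prob (slot_pmf n m t act) E =
     (\<integral>pos. measure_pmf.prob (Pi_pmf {..<n} None (act pos)) {a. (pos, a) \<in> E} \<partial>positions_pmf n m t)"
proof -
  have "slot_pmf n m t act
      = bind_pmf (positions_pmf n m t) (\<lambda>pos. map_pmf (Pair pos) (Pi_pmf {..<n} None (act pos)))"
    unfolding slot_pmf_def map_pmf_def by simp
  then show ?thesis
    by (simp add: measure_pmf_prob_bind vimage_def)
qed

lemma prob_Pi_pmf_transmit_others_silent:
  fixes act :: "'i \<Rightarrow> 'a option pmf"
  assumes "finite I" "i \<in> I" "Bad \<subseteq> I" "i \<notin> Bad"
  shows "pmf (act i) (Some j) * (\<Prod>k\<in>Bad. pmf (act k) None)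
       \<le> measure_pmf.prob (Pi_pmf I None act) {a. a i = Some j \<and> (\<forall>k\<in>Bad. a k = None)}"
proof -
  define C where "C = (\<lambda>k. if k = i then {Some j} else if k \<in> Bad then {None} else UNIV)"
  have "measure_pmf.prob (Pi_pmf I None act) (PiE_dflt I None C) = (\<Prod>k\<in>I. measure_pmf.prob (act k) (C k))"
    using assms(1) by (rule measure_Pi_pmf_PiE_dflt)
  also have "\<dots> = measure_pmf.prob (act i) (C i) * (\<Prod>k\<in>I - {i}. measure_pmf.prob (act k) (C k))"
    using assms(1,2) by (rule prod.remove)
  also have "(\<Prod>k\<in>I - {i}. measure_pmf.prob (act k) (C k)) = (\<Prod>k\<in>I - {i}. if k \<in> Bad then pmf (act k) None else 1)"
    by (intro prod.cong) (auto simp: C_def measure_pmf_single)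
  also have "\<dots> = (\<Prod>k\<in>(I - {i}) \<inter> Bad. pmf (act k) None)"
    using assms(1) by (intro prod.inter_restrict[symmetric]) simp
  also have "(I - {i}) \<inter> Bad = Bad"
    using assms by auto
  also have "measure_pmf.prob (act i) (C i) = pmf (act i) (Some j)"
    by (simp add: C_def measure_pmf_single)
  finally have "measure_pmf.prob (Pi_pmf I None act) (PiE_dflt I None C)
      = pmf (act i) (Some j) * (\<Prod>k\<in>Bad. pmf (act k) None)" .
  moreover have "PiE_dflt I None C \<subseteq> {a. a i = Some j \<and> (\<forall>k\<in>Bad. a k = None)}"
    unfolding PiE_dflt_def C_def using assms by auto
  then have "measure_pmf.prob (Pi_pmf I None act) (PiE_dflt I None C)
      \<le> measure_pmf.prob (Pi_pmf I None act) {a. a i = Some j \<and> (\<forall>k\<in>Bad. a k = None)}"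
    by (intro measure_pmf.finite_measure_mono) simp_all
  ultimately show ?thesis
    by simp
qed

lemma pmf_actionA_Some:
  assumes "S \<in> Src" "neighbors m u v z pos S R" "R < n" "0 \<le> pD" "pD \<le> 1" "0 \<le> \<alpha>" "\<alpha> \<le> 1"
  shows "pmf (actionA pD \<alpha> n m u v z Src pos S) (Some R)
       = pD * \<alpha> / card {j. j < n \<and> neighbors m u v z pos S j}"
proof -
  define N where "N = {j. j < n \<and> neighbors m u v z pos S j}"
  have R: "R \<in> N" and fin: "finite N"
    using assms unfolding N_def by auto
  have "actionA pD \<alpha> n m u v z Src pos S = bind_pmf (bernoulli_pmf pD) (\<lambda>act.
      if act \<and> N \<noteq> {} then bind_pmf (bernoulli_pmf \<alpha>)
        (\<lambda>a. if a then map_pmf Some (pmf_of_set N) else return_pmf None)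
      else return_pmf None)"
    unfolding actionA_def N_def using assms(1) by (simp add: Let_def)
  also have "pmf \<dots> (Some R) = pD * \<alpha> / card N"
    using assms R fin by (simp add: pmf_bind pmf_map_inj' pmf_of_set)
  finally show ?thesis
    unfolding N_def .
qed

lemma pmf_actionA_None_ge:
  assumes "0 \<le> pD" "pD \<le> 1" "0 \<le> \<alpha>" "\<alpha> \<le> 1"
  shows "1 - pD \<le> pmf (actionA pD \<alpha> n m u v z Src pos k) None"
proof (cases "k \<in> Src")
  case False
  then show ?thesis
    using assms unfolding actionA_def by simp
next
  case True
  define N where "N = {j. j < n \<and> neighbors m u v z pos k j}"
  have "actionA pD \<alpha> n m u v z Src pos k = bind_pmf (bernoulli_pmf pD) (\<lambda>act.
      if act \<and> N \<noteq> {} then bind_pmf (bernoulli_pmf \<alpha>)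
        (\<lambda>a. if a then map_pmf Some (pmf_of_set N) else return_pmf None)
      else return_pmf None)"
    unfolding actionA_def N_def using True by (simp add: Let_def)
  also have "1 - pD \<le> pmf \<dots> None"
    using assms by (simp add: pmf_bind)
  finally show ?thesis .
qed

lemma pmf_actionB_Some_ge:
  assumes "neighbors m u v z pos R D" "D < n" "D \<notin> Src" "0 \<le> pD" "pD \<le> 1" "0 \<le> \<alpha>" "\<alpha> \<le> 1"
  shows "pD * \<alpha> / card {j. j < n \<and> neighbors m u v z pos R j} \<le> pmf (actionB pD n m u v z Src pos R) (Some D)"
proof -
  define N where "N = {d. d < n \<and> d \<notin> Src \<and> neighbors m u v z pos R d}"
  have D: "D \<in> N" and fin: "finite N"
    using assms unfolding N_def by auto
  have "actionB pD n m u v z Src pos R = bind_pmf (bernoulli_pmf pD) (\<lambda>act.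
      if act \<and> N \<noteq> {} then map_pmf Some (pmf_of_set N) else return_pmf None)"
    unfolding actionB_def N_def by (simp add: Let_def)
  also have "pmf \<dots> (Some D) = pD / card N"
    using assms D fin by (simp add: pmf_bind pmf_map_inj' pmf_of_set)
  finally have "pmf (actionB pD n m u v z Src pos R) (Some D) = pD / card N" .
  moreover have "0 < card N" "card N \<le> card {j. j < n \<and> neighbors m u v z pos R j}"
    using D fin unfolding N_def by (auto intro!: card_mono simp: card_gt_0_iff)
  ultimately show ?thesis
    using assms by (simp add: frac_le mult_left_le)
qed

lemma pmf_actionB_None_ge:
  assumes "0 \<le> pD" "pD \<le> 1"
  shows "1 - pD \<le> pmf (actionB pD n m u v z Src pos k) None"
proof -
  define N where "N = {d. d < n \<and> d \<notin> Src \<and> neighbors m u v z pos k d}"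
  have "actionB pD n m u v z Src pos k = bind_pmf (bernoulli_pmf pD) (\<lambda>act.
      if act \<and> N \<noteq> {} then map_pmf Some (pmf_of_set N) else return_pmf None)"
    unfolding actionB_def N_def by (simp add: Let_def)
  also have "1 - pD \<le> pmf \<dots> None"
    using assms by (simp add: pmf_bind)
  finally show ?thesis .
qed

section \<open>Independent positions\<close>

lemma powr_le_linear_interpolation:
  fixes w t :: real
  assumes "0 < w" "w \<le> 1" "0 \<le> t" "t \<le> 1"
  shows "w powr t \<le> 1 - (1 - w) * t"
proof -
  have "exp ((1 - t) *\<^sub>R 0 + t *\<^sub>R ln w) \<le> (1 - t) * exp 0 + t * exp (ln w)"
    using convex_onD[OF exp_convex, of t 0 "ln w"] assms by simp
  then show ?thesis
    using assms by (simp add: powr_def mult.commute algebra_simps)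
qed

lemma expectation_if_in_else_1:
  fixes U :: "'a pmf" and w :: real
  shows "measure_pmf.expectation U (\<lambda>p. if p \<in> Z then w else 1) = 1 - (1 - w) * measure_pmf.prob U Z"
proof -
  have "(\<lambda>p. if p \<in> Z then w else 1) = (\<lambda>p. 1 - (1 - w) * indicator Z p)"
    by (auto simp: indicator_def)
  moreover have "measure_pmf.expectation U (\<lambda>p. 1 - (1 - w) * indicator Z p)
      = measure_pmf.expectation U (\<lambda>p. 1) - measure_pmf.expectation U (\<lambda>p. (1 - w) * indicator Z p)"
    by (intro Bochner_Integration.integral_diff integrable_mult_right integrable_real_indicator)
       (simp_all add: measure_pmf.emeasure_eq_measure)
  ultimately show ?thesis
    by simp
qed

text \<open>By independence the expectation factorises over the nodes, and for \<open>k \<noteq> i, j\<close> the factor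
  \<open>1 - (1 - w) P(Z k)\<close> is at least \<open>w powr P(Z k)\<close> by convexity.\<close>
lemma expectation_powr_hits_ge:
  fixes U :: "'a pmf" and Z :: "'i \<Rightarrow> 'a set" and Ci Cj :: "'a set" and w B :: real
  assumes I: "finite I" "i \<in> I" "j \<in> I" "i \<noteq> j" and w: "0 < w" "w \<le> 1"
    and B: "(\<Sum>k\<in>I - {i, j}. measure_pmf.prob U (Z k)) \<le> B"
  shows "measure_pmf.prob (Pi_pmf I d (\<lambda>_. U)) {pos. pos i \<in> Ci \<and> pos j \<in> Cj} * w powr B
     \<le> measure_pmf.expectation (Pi_pmf I d (\<lambda>_. U))
          (\<lambda>pos. indicator {pos. pos i \<in> Ci \<and> pos j \<in> Cj} pos * w ^ card {k \<in> I - {i, j}. pos k \<in> Z k})"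
proof -
  define P where "P = Pi_pmf I d (\<lambda>_. U)"
  define K where "K = I - {i, j}"
  define g :: "('i \<Rightarrow> 'a set) \<Rightarrow> 'i \<Rightarrow> 'a \<Rightarrow> real" where
    "g W k p = (if k = i then indicator Ci p else if k = j then indicator Cj p else if p \<in> W k then w else 1)"
    for W k p
  have finK: "finite K"
    unfolding K_def using I by simp
  have split: "(\<Prod>k\<in>I. F k) = F i * F j * (\<Prod>k\<in>K. F k)" for F :: "'i \<Rightarrow> real"
  proof -
    have "(\<Prod>k\<in>I. F k) = F i * (\<Prod>k\<in>I - {i}. F k)"
      using I by (intro prod.remove) auto
    also have "(\<Prod>k\<in>I - {i}. F k) = F j * (\<Prod>k\<in>I - {i} - {j}. F k)"
      using I by (intro prod.remove) auto
    also have "I - {i} - {j} = K"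
      unfolding K_def by auto
    finally show ?thesis
      by (simp add: mult.assoc)
  qed
  have integrand: "indicator {pos. pos i \<in> Ci \<and> pos j \<in> Cj} pos * w ^ card {k \<in> K. pos k \<in> W k}
      = (\<Prod>k\<in>I. g W k (pos k))" for W pos
  proof -
    have "(\<Prod>k\<in>K. g W k (pos k)) = (\<Prod>k\<in>K. if k \<in> {k. pos k \<in> W k} then w else 1)"
      by (intro prod.cong) (auto simp: K_def g_def)
    also have "\<dots> = (\<Prod>k\<in>K \<inter> {k. pos k \<in> W k}. w)"
      by (rule prod.inter_restrict[OF finK, symmetric])
    also have "\<dots> = w ^ card {k \<in> K. pos k \<in> W k}"
      by (simp add: Int_def)
    finally show ?thesis
      unfolding split using I by (simp add: g_def indicator_def)
  qed
  have expectation_prod: "measure_pmf.expectation P (\<lambda>pos. \<Prod>k\<in>I. g W k (pos k))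
      = (\<Prod>k\<in>I. measure_pmf.expectation U (g W k))" for W
    unfolding P_def using I(1) w
    by (intro expectation_prod_Pi_pmf measure_pmf.integrable_const_bound[where B=1])
       (auto simp: g_def indicator_def)
  define e where "e k = measure_pmf.expectation U (g Z k)" for k
  have "measure_pmf.prob P {pos. pos i \<in> Ci \<and> pos j \<in> Cj}
      = measure_pmf.expectation P (\<lambda>pos. \<Prod>k\<in>I. g (\<lambda>_. {}) k (pos k))"
    by (simp flip: integrand)
  also have "\<dots> = (\<Prod>k\<in>I. measure_pmf.expectation U (g (\<lambda>_. {}) k))"
    by (rule expectation_prod)
  also have "\<dots> = e i * e j"
  proof -
    have "g (\<lambda>_. {}) i = g Z i" "g (\<lambda>_. {}) j = g Z j"
      using I by (auto simp: g_def fun_eq_iff)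
    moreover have "g (\<lambda>_. {}) k = (\<lambda>_. 1)" if "k \<in> K" for k
      using that by (auto simp: K_def g_def fun_eq_iff)
    then have "(\<Prod>k\<in>K. measure_pmf.expectation U (g (\<lambda>_. {}) k)) = 1"
      by (intro prod.neutral) simp
    ultimately show ?thesis
      unfolding split e_def by simp
  qed
  finally have e_ij: "measure_pmf.prob P {pos. pos i \<in> Ci \<and> pos j \<in> Cj} = e i * e j" .
  have e_K: "w powr measure_pmf.prob U (Z k) \<le> e k" if "k \<in> K" for k
  proof -
    have "e k = 1 - (1 - w) * measure_pmf.prob U (Z k)"
      unfolding e_def g_def using that expectation_if_in_else_1[of U "Z k" w] by (simp add: K_def)
    then show ?thesis
      using w by (simp add: powr_le_linear_interpolation)
  qed
  have "w powr B \<le> w powr (\<Sum>k\<in>K. measure_pmf.prob U (Z k))"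
    using B w unfolding K_def by (intro powr_mono') auto
  also have "\<dots> = (\<Prod>k\<in>K. w powr measure_pmf.prob U (Z k))"
    using w by (simp add: powr_sum)
  also have "\<dots> \<le> (\<Prod>k\<in>K. e k)"
    using e_K by (intro prod_mono) auto
  finally have "w powr B \<le> (\<Prod>k\<in>K. e k)" .
  moreover have "0 \<le> e i * e j"
    using e_ij[symmetric] by simp
  ultimately have "measure_pmf.prob P {pos. pos i \<in> Ci \<and> pos j \<in> Cj} * w powr B \<le> e i * e j * (\<Prod>k\<in>K. e k)"
    unfolding e_ij by (rule mult_left_mono)
  also have "\<dots> = measure_pmf.expectation P
      (\<lambda>pos. indicator {pos. pos i \<in> Ci \<and> pos j \<in> Cj} pos * w ^ card {k \<in> K. pos k \<in> Z k})"
    unfolding integrand expectation_prod by (simp only: split e_def)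
  finally show ?thesis
    unfolding P_def K_def .
qed

lemma scaled_power_half_le:
  fixes c q :: real and a b Z :: nat
  assumes "0 \<le> c" "0 < q" "q \<le> 1" "1 \<le> a" "a \<le> Z + 1" "b \<le> Z + 1"
  shows "c * q * (q / 2) ^ Z \<le> c / real a * q ^ b"
proof -
  have "Z + 1 \<le> (2::nat) ^ Z"
    by (induction Z) auto
  then have a2: "real a \<le> 2 ^ Z"
    using assms by (metis of_nat_le_iff order_trans of_nat_numeral of_nat_power)
  have "q * (q / 2) ^ Z = q ^ (Z + 1) / 2 ^ Z"
    by (simp add: power_divide)
  also have "\<dots> \<le> q ^ b / 2 ^ Z"
    using assms by (intro divide_right_mono power_decreasing) auto
  also have "\<dots> \<le> q ^ b / real a"
    using assms a2 by (intro divide_left_mono) auto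
  finally have "c * (q * (q / 2) ^ Z) \<le> c * (q ^ b / real a)"
    using assms(1) by (rule mult_left_mono)
  then show ?thesis
    by (simp add: mult.assoc)
qed

section \<open>Success of a single link\<close>

locale link =
  fixes n m :: nat and x u v :: "nat \<Rightarrow> pt" and z :: "nat \<Rightarrow> nat \<Rightarrow> pt"
    and Src :: "nat set" and dst :: "nat \<Rightarrow> nat" and \<Delta> :: real and i j :: nat
  assumes m_pos: "0 < m" and config: "config n x u v z Src dst"
    and i_less: "i < n" and j_less: "j < n" and i_ne_j: "i \<noteq> j" and \<Delta>_pos: "0 < \<Delta>"
begin

definition half_spacing :: real where
  "half_spacing = rho * pi / real m"

text \<open>The lattice positions of node \<open>k\<close> from which it can be a neighbour of \<open>i\<close> or violate
  the guard zone of the link \<open>i \<rightarrow> j\<close>.\<close>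
definition zone :: "nat \<Rightarrow> nat set" where
  "zone k = {p. p < m \<and> sdist (loc m u v k p) (z i j) \<le> (3 + 2 * \<Delta>) * half_spacing}"

lemma half_spacing_pos: "0 < half_spacing"
  unfolding half_spacing_def using rho_pos m_pos by simp

lemma frame: "k < n \<Longrightarrow> circle_frame (x k) (u k) (v k)"
  using config by (rule config_circle_frame)

lemma norm_loc: "k < n \<Longrightarrow> norm (loc m u v k p) = rho"
  unfolding loc_def using frame by (rule norm_lattice_pt)

lemma z_link: "z i j \<in> great_circle (x i) \<inter> great_circle (x j)"
  using config i_less j_less i_ne_j by (rule config_z_in_great_circles)

lemma norm_z_link: "norm (z i j) = rho"
  using z_link unfolding great_circle_def by auto

lemma sdist_closest_le_half_spacing:
  "k < n \<Longrightarrow> w \<in> great_circle (x k) \<Longrightarrow> closest m u v k p w \<Longrightarrow> sdist (loc m u v k p) w \<le> half_spacing"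
  unfolding half_spacing_def using sdist_closest_le[OF frame _ m_pos] .

lemma neighbor_of_sender_in_zone:
  assumes nb: "neighbors m u v z pos i j" "neighbors m u v z pos i l" and l: "l < n"
  shows "pos l \<in> zone l"
proof -
  have cl: "closest m u v i (pos i) (z i j)" "closest m u v i (pos i) (z i l)" "closest m u v l (pos l) (z i l)"
    and "l \<noteq> i"
    using nb unfolding neighbors_def by auto
  then have zil: "z i l \<in> great_circle (x i) \<inter> great_circle (x l)"
    using config i_less l by (intro config_z_in_great_circles) auto
  then have nzil: "norm (z i l) = rho"
    unfolding great_circle_def by auto
  have "sdist (loc m u v l (pos l)) (z i j)
      \<le> sdist (loc m u v l (pos l)) (z i l) + (sdist (z i l) (loc m u v i (pos i)) + sdist (loc m u v i (pos i)) (z i j))"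
    using sdist_triangle[OF norm_loc[OF l, of "pos l"] nzil norm_z_link]
      sdist_triangle[OF nzil norm_loc[OF i_less, of "pos i"] norm_z_link]
    by linarith
  also have "\<dots> \<le> half_spacing + (half_spacing + half_spacing)"
    unfolding sdist_sym[of "z i l"] using cl zil z_link l i_less
    by (intro add_mono sdist_closest_le_half_spacing) auto
  also have "\<dots> \<le> (3 + 2 * \<Delta>) * half_spacing"
    using \<Delta>_pos half_spacing_pos by simp
  finally show ?thesis
    using cl(3) unfolding zone_def closest_def by simp
qed

lemma guard_violator_in_zone:
  assumes nb: "neighbors m u v z pos i j" and k: "k < n" "pos k < m"
    and violates: "\<not> (1 + \<Delta>) * sdist (loc m u v i (pos i)) (loc m u v j (pos j))
                       \<le> sdist (loc m u v k (pos k)) (loc m u v j (pos j))"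
  shows "pos k \<in> zone k"
proof -
  have "closest m u v i (pos i) (z i j)" "closest m u v j (pos j) (z i j)"
    using nb unfolding neighbors_def by auto
  then have "sdist (loc m u v i (pos i)) (z i j) \<le> half_spacing" "sdist (loc m u v j (pos j)) (z i j) \<le> half_spacing"
    using z_link i_less j_less by (auto intro: sdist_closest_le_half_spacing)
  then have "sdist (loc m u v k (pos k)) (z i j) \<le> (3 + 2 * \<Delta>) * half_spacing"
    using violates \<Delta>_pos
    by (intro sdist_guard_violator_le[OF norm_loc[OF i_less] norm_loc[OF j_less] norm_loc[OF k(1)] norm_z_link])
       (auto simp: not_le)
  then show ?thesis
    unfolding zone_def using k by simp
qed

lemma card_zone_le:
  assumes k: "k < n"
  shows "real (card (zone k)) \<le> 8 * pi * (3 + 2 * \<Delta>) + 2"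
proof -
  have "norm (lattice_pt m (u k) (v k) p - z i j) \<le> sdist (lattice_pt m (u k) (v k) p) (z i j)" for p
    using chord_le_sdist[OF norm_loc[OF k] norm_z_link] unfolding loc_def .
  then have "zone k \<subseteq> {p. p < m \<and> norm (lattice_pt m (u k) (v k) p - z i j) \<le> (3 + 2 * \<Delta>) * half_spacing}"
    unfolding zone_def loc_def by (auto intro: order_trans)
  then have "card (zone k) \<le> card {p. p < m \<and> norm (lattice_pt m (u k) (v k) p - z i j) \<le> (3 + 2 * \<Delta>) * half_spacing}"
    by (intro card_mono) auto
  also have "real \<dots> \<le> 8 * ((3 + 2 * \<Delta>) * half_spacing) * real m / rho + 2"
    using \<Delta>_pos half_spacing_pos by (intro card_lattice_pts_in_ball[OF frame[OF k] m_pos]) simp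
  also have "\<dots> = 8 * pi * (3 + 2 * \<Delta>) + 2"
    unfolding half_spacing_def using m_pos rho_pos by simp
  finally show ?thesis
    by simp
qed

text \<open>The radius \<open>(2 + \<Delta>)\<surd>(\<pi>/n)\<close> of \<open>C\<^sub>i\<^sub>j\<close> is \<open>(4 + 2\<Delta>) half_spacing\<close>.\<close>
lemma zone_nonempty_imp_crosses_disk:
  assumes nm: "n = m\<^sup>2" and k: "k < n" and p: "p \<in> zone k"
  shows "great_circle (x k) \<inter> sdisk (z i j) ((2 + \<Delta>) * sqrt (pi / real n)) \<noteq> {}"
proof -
  have "sqrt (pi / real n) = 2 * half_spacing"
    unfolding nm half_spacing_def rho_def using m_pos by (simp add: real_sqrt_divide field_simps)
  then have "(3 + 2 * \<Delta>) * half_spacing \<le> (2 + \<Delta>) * sqrt (pi / real n)"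
    using half_spacing_pos by (simp add: algebra_simps)
  then have "loc m u v k p \<in> sdisk (z i j) ((2 + \<Delta>) * sqrt (pi / real n))"
    using p norm_loc[OF k] unfolding zone_def sdisk_def sphere2_def by auto
  moreover have "loc m u v k p \<in> great_circle (x k)"
    unfolding loc_def using frame[OF k] by (rule lattice_pt_in_great_circle)
  ultimately show ?thesis
    by blast
qed

lemma sum_prob_zone_le:
  assumes nm: "n = m\<^sup>2" and typical_cfg: "typical K1 K2 \<Delta> n x z"
  shows "(\<Sum>k\<in>{..<n} - {i, j}. measure_pmf.prob (pmf_of_set {..<m}) (zone k))
       \<le> K2 * (8 * pi * (3 + 2 * \<Delta>) + 2)"
proof -
  define Cc where "Cc = 8 * pi * (3 + 2 * \<Delta>) + 2"
  define Circ where "Circ = {k. k < n \<and> great_circle (x k) \<inter> sdisk (z i j) ((2 + \<Delta>) * sqrt (pi / real n)) \<noteq> {}}"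
  define K where "K = {..<n} - {i, j}"
  have prob_zone: "measure_pmf.prob (pmf_of_set {..<m}) (zone k) = real (card (zone k)) / real m" for k
  proof -
    have "{..<m} \<inter> zone k = zone k"
      unfolding zone_def by auto
    then show ?thesis
      using m_pos by (subst measure_pmf_of_set) auto
  qed
  have "real (card Circ) \<le> K2 * real m"
    using typical_cfg i_less j_less i_ne_j unfolding typical_def Circ_def Let_def nm by auto
  have "(\<Sum>k\<in>K. measure_pmf.prob (pmf_of_set {..<m}) (zone k))
      = (\<Sum>k\<in>K \<inter> Circ. measure_pmf.prob (pmf_of_set {..<m}) (zone k))"
  proof (rule sum.mono_neutral_right)
    show "\<forall>k\<in>K - K \<inter> Circ. measure_pmf.prob (pmf_of_set {..<m}) (zone k) = 0"
    proof
      fix k assume "k \<in> K - K \<inter> Circ"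
      then have "zone k = {}"
        using zone_nonempty_imp_crosses_disk[OF nm] unfolding K_def Circ_def by blast
      then show "measure_pmf.prob (pmf_of_set {..<m}) (zone k) = 0"
        by simp
    qed
  qed (auto simp: K_def)
  also have "\<dots> = (\<Sum>k\<in>K \<inter> Circ. real (card (zone k)) / real m)"
    by (simp add: prob_zone)
  also have "\<dots> \<le> (\<Sum>k\<in>K \<inter> Circ. Cc / real m)"
    using card_zone_le m_pos unfolding Cc_def K_def by (intro sum_mono divide_right_mono) auto
  also have "\<dots> = real (card (K \<inter> Circ)) * (Cc / real m)"
    by simp
  also have "\<dots> \<le> real (card Circ) * (Cc / real m)"
  proof (rule mult_right_mono)
    show "real (card (K \<inter> Circ)) \<le> real (card Circ)"
      unfolding Circ_def by (intro of_nat_mono card_mono) auto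
    show "0 \<le> Cc / real m"
      unfolding Cc_def using \<Delta>_pos by simp
  qed
  also have "\<dots> \<le> (K2 * real m) * (Cc / real m)"
    using \<open>real (card Circ) \<le> K2 * real m\<close> \<Delta>_pos m_pos unfolding Cc_def
    by (intro mult_right_mono) auto
  also have "\<dots> = K2 * Cc"
    using m_pos by simp
  finally show ?thesis
    unfolding K_def Cc_def .
qed

text \<open>The other neighbours of \<open>i\<close> and the guard violators are \<open>j\<close> or among the nodes counted in
  the exponent, so there are at most one more of each than that count.\<close>
lemma success_prob_given_positions:
  fixes act :: "nat \<Rightarrow> nat option pmf" and Tx :: "(nat \<Rightarrow> nat option) \<Rightarrow> nat \<Rightarrow> bool"
  assumes pos: "\<forall>k<n. pos k < m" and nb: "neighbors m u v z pos i j"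
    and c0: "0 \<le> c0" and q: "0 < q" "q \<le> 1"
    and transmit: "c0 / card {l. l < n \<and> neighbors m u v z pos i l} \<le> pmf (act i) (Some j)"
    and silent: "\<And>k. q \<le> pmf (act k) None"
    and Tx: "\<And>a k. Tx a k \<Longrightarrow> a k \<noteq> None"
  shows "c0 * q * (q / 2) ^ card {k \<in> {..<n} - {i, j}. pos k \<in> zone k}
       \<le> measure_pmf.prob (Pi_pmf {..<n} None act) {a. a i = Some j \<and> protocol_ok \<Delta> n m u v pos (Tx a) i j}"
proof -
  define Zs where "Zs = {k \<in> {..<n} - {i, j}. pos k \<in> zone k}"
  define N where "N = {l. l < n \<and> neighbors m u v z pos i l}"
  define Bad where "Bad = {k. k < n \<and> k \<noteq> i \<and> \<not> (1 + \<Delta>) * sdist (loc m u v i (pos i)) (loc m u v j (pos j))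
                                              \<le> sdist (loc m u v k (pos k)) (loc m u v j (pos j))}"
  have finZs: "finite Zs"
    unfolding Zs_def by simp
  have card_insert: "card A \<le> card Zs + 1" if "A \<subseteq> insert j Zs" for A
  proof -
    have "card A \<le> card (insert j Zs)"
      using finZs that by (intro card_mono) auto
    also have "\<dots> \<le> card Zs + 1"
      using finZs by (simp add: card_insert_if)
    finally show ?thesis .
  qed
  have "N \<subseteq> insert j Zs"
    using neighbor_of_sender_in_zone[OF nb] unfolding N_def Zs_def neighbors_def by auto
  moreover have "j \<in> N"
    using nb j_less unfolding N_def by simp
  ultimately have N: "1 \<le> card N" "card N \<le> card Zs + 1"
    using card_insert by (auto simp: N_def Suc_le_eq card_gt_0_iff)
  have "Bad \<subseteq> insert j Zs"
    using guard_violator_in_zone[OF nb] pos unfolding Bad_def Zs_def by auto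
  then have Bad: "card Bad \<le> card Zs + 1"
    by (rule card_insert)
  have "c0 * q * (q / 2) ^ card Zs \<le> c0 / real (card N) * q ^ card Bad"
    using c0 q N Bad by (rule scaled_power_half_le)
  also have "\<dots> \<le> pmf (act i) (Some j) * (\<Prod>k\<in>Bad. pmf (act k) None)"
  proof (rule mult_mono)
    have "q ^ card Bad = (\<Prod>k\<in>Bad. q)"
      by simp
    also have "\<dots> \<le> (\<Prod>k\<in>Bad. pmf (act k) None)"
      using q silent by (intro prod_mono) auto
    finally show "q ^ card Bad \<le> (\<Prod>k\<in>Bad. pmf (act k) None)" .
  qed (use transmit q in \<open>simp_all add: N_def\<close>)
  also have "\<dots> \<le> measure_pmf.prob (Pi_pmf {..<n} None act) {a. a i = Some j \<and> (\<forall>k\<in>Bad. a k = None)}"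
    using i_less by (intro prob_Pi_pmf_transmit_others_silent) (auto simp: Bad_def)
  also have "\<dots> \<le> measure_pmf.prob (Pi_pmf {..<n} None act) {a. a i = Some j \<and> protocol_ok \<Delta> n m u v pos (Tx a) i j}"
  proof (intro measure_pmf.finite_measure_mono subsetI)
    fix a assume a: "a \<in> {a. a i = Some j \<and> (\<forall>k\<in>Bad. a k = None)}"
    have "k \<notin> Bad" if "Tx a k" for k
      using a Tx[OF that] by auto
    then show "a \<in> {a. a i = Some j \<and> protocol_ok \<Delta> n m u v pos (Tx a) i j}"
      using a unfolding protocol_ok_def Bad_def by auto
  qed simp
  finally show ?thesis
    unfolding Zs_def .
qed

lemma slot_success_prob_ge:
  fixes act :: "(nat \<Rightarrow> nat) \<Rightarrow> nat \<Rightarrow> nat option pmf"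
    and Tx :: "(nat \<Rightarrow> nat) \<Rightarrow> (nat \<Rightarrow> nat option) \<Rightarrow> nat \<Rightarrow> bool"
  assumes nm: "n = m\<^sup>2" and typical_cfg: "typical K1 K2 \<Delta> n x z"
    and c0: "0 \<le> c0" and q: "0 < q" "q \<le> 1"
    and transmit: "\<And>pos. neighbors m u v z pos i j \<Longrightarrow>
                     c0 / card {l. l < n \<and> neighbors m u v z pos i l} \<le> pmf (act pos i) (Some j)"
    and silent: "\<And>pos k. q \<le> pmf (act pos k) None"
    and Tx: "\<And>pos a k. Tx pos a k \<Longrightarrow> a k \<noteq> None"
  shows "c0 * q * (q / 2) powr (K2 * (8 * pi * (3 + 2 * \<Delta>) + 2))
           * measure_pmf.prob (positions_pmf n m t) {pos. neighbors m u v z pos i j}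
       \<le> measure_pmf.prob (slot_pmf n m t act)
           {(pos, a). neighbors m u v z pos i j \<and> a i = Some j \<and> protocol_ok \<Delta> n m u v pos (Tx pos a) i j}"
proof -
  define P where "P = positions_pmf n m t"
  define Ci where "Ci = {p. closest m u v i p (z i j)}"
  define Cj where "Cj = {p. closest m u v j p (z i j)}"
  define hits where "hits pos = card {k \<in> {..<n} - {i, j}. pos k \<in> zone k}" for pos :: "nat \<Rightarrow> nat"
  have nb_iff: "{pos. neighbors m u v z pos i j} = {pos. pos i \<in> Ci \<and> pos j \<in> Cj}"
    unfolding neighbors_def Ci_def Cj_def using i_ne_j by auto
  have finP: "finite (set_pmf P)"
    unfolding P_def set_pmf_positions_pmf[OF m_pos] by auto
  have "measure_pmf.prob P {pos. neighbors m u v z pos i j} * (q / 2) powr (K2 * (8 * pi * (3 + 2 * \<Delta>) + 2))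
      \<le> measure_pmf.expectation P (\<lambda>pos. indicator {pos. neighbors m u v z pos i j} pos * (q / 2) ^ hits pos)"
    unfolding P_def positions_pmf_uniform[OF m_pos] nb_iff hits_def
    using i_less j_less i_ne_j q sum_prob_zone_le[OF nm typical_cfg]
    by (intro expectation_powr_hits_ge) auto
  then have "c0 * q * (q / 2) powr (K2 * (8 * pi * (3 + 2 * \<Delta>) + 2)) * measure_pmf.prob P {pos. neighbors m u v z pos i j}
      \<le> measure_pmf.expectation P (\<lambda>pos. c0 * q * (indicator {pos. neighbors m u v z pos i j} pos * (q / 2) ^ hits pos))"
    using c0 q by (simp add: mult_left_mono mult.commute mult.left_commute)
  also have "\<dots> \<le> measure_pmf.expectation P (\<lambda>pos. measure_pmf.prob (Pi_pmf {..<n} None (act pos))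
      {a. (pos, a) \<in> {(pos, a). neighbors m u v z pos i j \<and> a i = Some j \<and> protocol_ok \<Delta> n m u v pos (Tx pos a) i j}})"
  proof (intro integral_mono_AE AE_pmfI integrable_measure_pmf_finite[OF finP])
    fix pos assume "pos \<in> set_pmf P"
    then have "\<forall>k<n. pos k < m"
      unfolding P_def set_pmf_positions_pmf[OF m_pos] PiE_dflt_def by auto
    then show "c0 * q * (indicator {pos. neighbors m u v z pos i j} pos * (q / 2) ^ hits pos)
        \<le> measure_pmf.prob (Pi_pmf {..<n} None (act pos)) {a. (pos, a) \<in> {(pos, a).
             neighbors m u v z pos i j \<and> a i = Some j \<and> protocol_ok \<Delta> n m u v pos (Tx pos a) i j}}"
      using success_prob_given_positions[of pos c0 q "act pos" "Tx pos"] transmit silent Tx c0 q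
      unfolding hits_def by (cases "neighbors m u v z pos i j") auto
  qed
  also have "\<dots> = measure_pmf.prob (slot_pmf n m t act)
      {(pos, a). neighbors m u v z pos i j \<and> a i = Some j \<and> protocol_ok \<Delta> n m u v pos (Tx pos a) i j}"
    unfolding P_def by (rule prob_slot_pmf[symmetric])
  finally show ?thesis
    unfolding P_def .
qed

end

definition success_const :: "real \<Rightarrow> real \<Rightarrow> real \<Rightarrow> real \<Rightarrow> real" where
  "success_const pD \<alpha> \<Delta> K = pD * \<alpha> * (1 - pD) * ((1 - pD) / 2) powr (K * (8 * pi * (3 + 2 * \<Delta>) + 2))"

lemma link_intro:
  assumes "n = m\<^sup>2" "2 \<le> n" "config n x u v z Src dst" "i < n" "j < n" "i \<noteq> j" "0 < \<Delta>"
  shows "link n m x u v z Src dst \<Delta> i j"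
proof
  show "0 < m"
    using assms(1,2) by (cases m) auto
qed (use assms in auto)

lemma subslotA_success_prob_ge:
  assumes pD: "0 \<le> pD" "pD < 1" and \<alpha>: "0 \<le> \<alpha>" "\<alpha> \<le> 1" and \<Delta>: "0 < \<Delta>"
    and n: "n = m\<^sup>2" "2 \<le> n" and cfg: "config n x u v z Src dst" and typical_cfg: "typical K1 K2 \<Delta> n x z"
    and S: "S \<in> Src" and R: "R < n"
  shows "success_const pD \<alpha> \<Delta> K2 * measure_pmf.prob (positions_pmf n m t) {pos. neighbors m u v z pos S R}
       \<le> measure_pmf.prob (slot_pmf n m t (actionA pD \<alpha> n m u v z Src))
           {(pos, a). neighbors m u v z pos S R \<and> a S = Some R
                      \<and> protocol_ok \<Delta> n m u v pos (\<lambda>k. a k \<noteq> None) S R}"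
proof (cases "S = R")
  case True
  then show ?thesis
    by (simp add: neighbors_def)
next
  case False
  have "S < n"
    using S cfg unfolding config_def by auto
  then have "link n m x u v z Src dst \<Delta> S R"
    using n cfg R False \<Delta> by (intro link_intro)
  then show ?thesis
    unfolding success_const_def using pD \<alpha> S R n(1) typical_cfg
    by (intro link.slot_success_prob_ge[where Tx = "\<lambda>pos a k. a k \<noteq> None"])
       (simp_all add: pmf_actionA_Some pmf_actionA_None_ge)
qed

lemma subslotB_success_prob_ge:
  fixes hasp :: "(nat \<Rightarrow> nat) \<Rightarrow> nat \<Rightarrow> nat \<Rightarrow> bool"
  assumes pD: "0 \<le> pD" "pD < 1" and \<alpha>: "0 \<le> \<alpha>" "\<alpha> \<le> 1" and \<Delta>: "0 < \<Delta>"
    and n: "n = m\<^sup>2" "2 \<le> n" and cfg: "config n x u v z Src dst" and typical_cfg: "typical K1 K2 \<Delta> n x z"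
    and R: "R < n" and D: "D < n" "D \<notin> Src"
  shows "success_const pD \<alpha> \<Delta> K2 * measure_pmf.prob (positions_pmf n m t) {pos. neighbors m u v z pos R D}
       \<le> measure_pmf.prob (slot_pmf n m t (actionB pD n m u v z Src))
           {(pos, a). neighbors m u v z pos R D \<and> a R = Some D
                      \<and> protocol_ok \<Delta> n m u v pos (\<lambda>k. \<exists>d. a k = Some d \<and> hasp pos k d) R D}"
proof (cases "R = D")
  case True
  then show ?thesis
    by (simp add: neighbors_def)
next
  case False
  then have "link n m x u v z Src dst \<Delta> R D"
    using n cfg R D \<Delta> by (intro link_intro)
  then show ?thesis
    unfolding success_const_def using pD \<alpha> D n(1) typical_cfg
    by (intro link.slot_success_prob_ge[where Tx = "\<lambda>pos a k. \<exists>d. a k = Some d \<and> hasp pos k d"])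
       (simp_all add: pmf_actionB_Some_ge pmf_actionB_None_ge, blast)
qed

theorem lemma2:
  fixes pD \<alpha> \<Delta> K1 K2 :: real
  assumes "0 < pD" "pD < 1" "0 < \<alpha>" "\<alpha> < 1" "0 < \<Delta>" "0 < K1" "K1 \<le> K2"
  shows "\<exists>c>0. \<forall>n m x u v z Src dst t.
     n = m\<^sup>2 \<longrightarrow> even n \<longrightarrow> 2 \<le> n \<longrightarrow> config n x u v z Src dst \<longrightarrow> typical K1 K2 \<Delta> n x z \<longrightarrow>
     (\<forall>S\<in>Src. \<forall>R<n.
        measure_pmf.prob (slot_pmf n m t (actionA pD \<alpha> n m u v z Src))
          {(pos, a). neighbors m u v z pos S R \<and> a S = Some R
                     \<and> protocol_ok \<Delta> n m u v pos (\<lambda>k. a k \<noteq> None) S R}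
        \<ge> c * measure_pmf.prob (positions_pmf n m t) {pos. neighbors m u v z pos S R})
   \<and> (\<forall>R<n. \<forall>D<n. D \<notin> Src \<longrightarrow> (\<forall>hasp :: (nat \<Rightarrow> nat) \<Rightarrow> nat \<Rightarrow> nat \<Rightarrow> bool.
        measure_pmf.prob (slot_pmf n m t (actionB pD n m u v z Src))
          {(pos, a). neighbors m u v z pos R D \<and> a R = Some D
                     \<and> protocol_ok \<Delta> n m u v pos (\<lambda>k. \<exists>d. a k = Some d \<and> hasp pos k d) R D}
        \<ge> c * measure_pmf.prob (positions_pmf n m t) {pos. neighbors m u v z pos R D}))"
proof -
  have "0 < success_const pD \<alpha> \<Delta> K2"
    unfolding success_const_def using assms by simp
  then show ?thesis
    using assms
    by (intro exI[of _ "success_const pD \<alpha> \<Delta> K2"] conjI allI impI ballI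
          subslotA_success_prob_ge subslotB_success_prob_ge) auto
qed

end
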